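(* Let $Q$ be an $n\times n$ real symmetric matrix, $\Delta_n := \{x \in \mathbb{R}^n : x \ge 0,\ \sum_{j} x_j = 1\}$, and $\nu(Q) := \min_{x\in\Delta_n} x^TQx$. Let $\ell \in \mathbb{R}$ be any lower bound on $\nu(Q)$, and define $M_j = \max_{i=1,\ldots,n} Q_{ij} - \ell$ for $j=1,\ldots,n$. Let $U_1,\ldots,U_n$ satisfy $U_j \ge M_j$ for all $j$. Consider the mixed integer linear program (MILP2) in variables $x, z \in \mathbb{R}^n$, $y \in \{0,1\}^n$, $\alpha \in \mathbb{R}$: \[ \min\ \alpha \quad \text{s.t.}\quad e_j^TQx \le \alpha + z_j\ (j=1,\ldots,n),\quad e^Tx = 1,\quad x_j \le y_j\ (j=1,\ldots,n),\quad z_j \le U_j(1-y_j)\ (j=1,\ldots,n),\quad x \ge 0,\ z \ge 0,\ y_j \in \{0,1\}\ (j=1,\ldots,n), \] where $e_j$ is the $j$-th unit vector and $e$ the all-ones vector. Then (MILP2) is an equivalent reformulation of the problem $\min\{x^TQx : x \in \Delta_n\}$; in particular, the optimal value of (MILP2) equals $\nu(Q)$. *)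

theory Defs
  imports "HOL-Analysis.Analysis"
begin

text \<open>Standard simplex \<Delta>_n in R^n (index type 'n, n = CARD('n)).\<close>
definition std_simplex :: "(real^'n) set" where
  "std_simplex = {x. (\<forall>j. 0 \<le> x $ j) \<and> (\<Sum>j\<in>UNIV. x $ j) = 1}"

definition qform :: "real^'n^'n \<Rightarrow> real^'n \<Rightarrow> real" where
  "qform Q x = x \<bullet> (Q *v x)"

text \<open>nu(Q) = min over the simplex of x^T Q x (the minimum is attained by compactness).\<close>
definition nu :: "real^'n^'n \<Rightarrow> real" where
  "nu Q = Inf (qform Q ` std_simplex)"

definition bigM :: "real^'n^'n \<Rightarrow> real \<Rightarrow> 'n \<Rightarrow> real" where
  "bigM Q l j = Max (range (\<lambda>i. Q $ i $ j)) - l"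

text \<open>Feasibility for (MILP2) in variables x, z, y, alpha.  Note e_j^T Q x = (Q x)_j.\<close>
definition milp2_feasible ::
  "real^'n^'n \<Rightarrow> real^'n \<Rightarrow> real^'n \<Rightarrow> real^'n \<Rightarrow> real^'n \<Rightarrow> real \<Rightarrow> bool" where
  "milp2_feasible Q U x z y \<alpha> \<longleftrightarrow>
     (\<forall>j. (Q *v x) $ j \<le> \<alpha> + z $ j) \<and>
     (\<Sum>j\<in>UNIV. x $ j) = 1 \<and>
     (\<forall>j. x $ j \<le> y $ j) \<and>
     (\<forall>j. z $ j \<le> U $ j * (1 - y $ j)) \<and>
     (\<forall>j. 0 \<le> x $ j) \<and> (\<forall>j. 0 \<le> z $ j) \<and>
     (\<forall>j. y $ j \<in> {0, 1})"

definition milp2_value :: "real^'n^'n \<Rightarrow> real^'n \<Rightarrow> real" where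
  "milp2_value Q U = Inf {\<alpha>. \<exists>x z y. milp2_feasible Q U x z y \<alpha>}"

end

theory Submission
  imports Defs
begin

text \<open>
  A feasible point of (MILP2) has \<open>x\<close> in the simplex, and \<open>y\<^sub>j = 1\<close>, hence \<open>z\<^sub>j = 0\<close> and
  \<open>(Qx)\<^sub>j \<le> \<alpha>\<close>, on the support of \<open>x\<close>; averaging with the weights \<open>x\<^sub>j\<close> gives
  \<open>x\<^sup>TQx \<le> \<alpha>\<close>, so the value of (MILP2) is at least \<open>\<nu>(Q)\<close>.
  Conversely, at a minimiser \<open>x\<close> of the quadratic form, moving mass from one coordinate to
  another shows that \<open>(Qx)\<^sub>j\<close> is minimal on the support of \<open>x\<close>; hence \<open>(Qx)\<^sub>j = \<nu>(Q)\<close> there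
  and \<open>(Qx)\<^sub>j \<ge> \<nu>(Q)\<close> everywhere. Taking \<open>y\<close> the indicator of the support and
  \<open>z\<^sub>j = (Qx)\<^sub>j - \<nu>(Q)\<close> off the support gives a feasible point with \<open>\<alpha> = \<nu>(Q)\<close>: the bound
  \<open>z\<^sub>j \<le> U\<^sub>j\<close> holds because \<open>(Qx)\<^sub>j\<close> is a convex combination of row \<open>j\<close> of \<open>Q\<close>, which by
  symmetry is column \<open>j\<close>, and \<open>\<nu>(Q) \<ge> l\<close>.
\<close>

lemma std_simplex_inner_le:
  assumes "x \<in> std_simplex" and "\<And>i. 0 < x $ i \<Longrightarrow> v $ i \<le> c"
  shows "x \<bullet> v \<le> c"
proof -
  have "x $ i * v $ i \<le> x $ i * c" for i
  proof (cases "0 < x $ i")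
    case True
    then show ?thesis
      by (intro mult_left_mono assms(2)) simp_all
  next
    case False
    moreover have "0 \<le> x $ i"
      using assms(1) unfolding std_simplex_def by simp
    ultimately show ?thesis
      by simp
  qed
  then have "x \<bullet> v \<le> (\<Sum>i\<in>UNIV. x $ i * c)"
    unfolding inner_vec_def by (intro sum_mono) simp
  also have "\<dots> = c"
    using assms(1) unfolding std_simplex_def by (simp add: sum_distrib_right[symmetric])
  finally show ?thesis .
qed

lemma std_simplex_inner_ge:
  assumes "x \<in> std_simplex" and "\<And>i. 0 < x $ i \<Longrightarrow> c \<le> v $ i"
  shows "c \<le> x \<bullet> v"
proof -
  have "x \<bullet> (- v) \<le> - c"
    by (rule std_simplex_inner_le[OF assms(1)]) (simp add: assms(2))
  then show ?thesis by simp
qed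

lemma matrix_vector_mult_component_inner: "(A *v x) $ j = x \<bullet> A $ j"
  by (simp add: matrix_vector_mult_def inner_vec_def mult.commute)

lemma compact_std_simplex: "compact (std_simplex :: (real^'n) set)"
proof (rule compact_eq_bounded_closed[THEN iffD2], rule conjI)
  have "norm x \<le> 1" if "x \<in> std_simplex" for x :: "real^'n"
  proof -
    have "norm x \<le> (\<Sum>j\<in>UNIV. \<bar>x $ j\<bar>)" by (rule norm_le_l1_cart)
    also have "\<dots> = 1" using that unfolding std_simplex_def by simp
    finally show ?thesis .
  qed
  then show "bounded (std_simplex :: (real^'n) set)"
    unfolding bounded_iff by blast
  have "closed (\<Inter>j. {x::real^'n. 0 \<le> x $ j})"
    by (intro closed_INT ballI closed_halfspace_component_ge_cart)
  moreover have "closed {x::real^'n. (\<Sum>j\<in>UNIV. x $ j) = 1}"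
    by (intro closed_Collect_eq continuous_intros)
  moreover have "std_simplex = (\<Inter>j. {x::real^'n. 0 \<le> x $ j}) \<inter> {x. (\<Sum>j\<in>UNIV. x $ j) = 1}"
    unfolding std_simplex_def by auto
  ultimately show "closed (std_simplex :: (real^'n) set)"
    by (metis closed_Int)
qed

lemma std_simplex_nonempty: "(std_simplex :: (real^'n) set) \<noteq> {}"
proof -
  have "(\<chi> j. 1 / real CARD('n)) \<in> (std_simplex :: (real^'n) set)"
    unfolding std_simplex_def by simp
  then show ?thesis by blast
qed

lemma continuous_on_qform: "continuous_on S (qform Q)"
  unfolding qform_def by (intro continuous_intros linear_continuous_on bounded_linear_intros)

lemma nu_attained: "\<exists>x\<in>std_simplex. qform Q x = nu Q \<and> (\<forall>w\<in>std_simplex. nu Q \<le> qform Q w)"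
proof -
  obtain x where x: "x \<in> std_simplex" "\<forall>w\<in>std_simplex. qform Q x \<le> qform Q w"
    using continuous_attains_inf[OF compact_std_simplex std_simplex_nonempty continuous_on_qform]
    by blast
  then have "nu Q = qform Q x"
    unfolding nu_def by (intro cInf_eq_minimum) auto
  with x show ?thesis by auto
qed

lemma nu_le_qform: "x \<in> std_simplex \<Longrightarrow> nu Q \<le> qform Q x"
  using nu_attained by blast

lemma qform_add_scaleR:
  assumes "transpose Q = Q"
  shows "qform Q (x + t *\<^sub>R d) = qform Q x + 2 * t * (d \<bullet> (Q *v x)) + t\<^sup>2 * qform Q d"
proof -
  have "x \<bullet> (Q *v d) = d \<bullet> (Q *v x)"
    by (metis assms dot_lmul_matrix inner_commute transpose_matrix_vector)
  then show ?thesis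
    unfolding qform_def matrix_vector_right_distrib matrix_vector_mult_scaleR inner_add_left
      inner_add_right inner_scaleR_left inner_scaleR_right
    by (simp add: power2_eq_square algebra_simps)
qed

lemma std_simplex_move_mass:
  assumes "x \<in> std_simplex" and "0 \<le> t" and "t \<le> x $ j"
  shows "x + t *\<^sub>R (axis k 1 - axis j 1) \<in> std_simplex"
proof -
  have component: "(x + t *\<^sub>R (axis k 1 - axis j 1)) $ i
      = x $ i + (if i = k then t else 0) - (if i = j then t else 0)" for i
    by (auto simp: axis_def)
  have "0 \<le> (x + t *\<^sub>R (axis k 1 - axis j 1)) $ i" for i
    using assms unfolding component std_simplex_def by auto
  moreover have "(\<Sum>i\<in>UNIV. (x + t *\<^sub>R (axis k 1 - axis j 1)) $ i) = 1"
    using assms(1) unfolding component std_simplex_def by (simp add: sum.distrib sum_subtractf)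
  ultimately show ?thesis
    unfolding std_simplex_def by simp
qed

lemma quadratic_negative_near_zero:
  fixes a b c :: real
  assumes "a < 0" and "0 < c"
  obtains t where "0 < t" "t \<le> c" "a * t + b * t\<^sup>2 < 0"
proof
  define t where "t = min c (- a / (\<bar>b\<bar> + 1))"
  show "0 < t" "t \<le> c"
    using assms divide_neg_pos[of a "\<bar>b\<bar> + 1"] by (auto simp: t_def)
  have "b * t \<le> \<bar>b\<bar> * t"
    using \<open>0 < t\<close> by (simp add: mult_right_mono)
  also have "\<dots> \<le> \<bar>b\<bar> * (- a / (\<bar>b\<bar> + 1))"
    by (intro mult_left_mono) (auto simp: t_def)
  also have "\<dots> < - a"
    using assms(1) by (simp add: field_simps)
  finally have "a + b * t < 0" by linarith
  then have "t * (a + b * t) < 0"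
    using \<open>0 < t\<close> by (rule mult_pos_neg[rotated])
  then show "a * t + b * t\<^sup>2 < 0"
    by (simp add: power2_eq_square algebra_simps)
qed

lemma std_simplex_minimizer_grad_le:
  fixes Q :: "real^'n^'n"
  assumes "transpose Q = Q" and x: "x \<in> std_simplex"
    and min: "\<forall>w\<in>std_simplex. qform Q x \<le> qform Q w"
    and "0 < x $ j"
  shows "(Q *v x) $ j \<le> (Q *v x) $ k"
proof (rule ccontr)
  define d :: "real^'n" where "d = axis k 1 - axis j 1"
  assume "\<not> ?thesis"
  then have "d \<bullet> (Q *v x) < 0"
    by (simp add: d_def inner_diff_left inner_axis')
  then obtain t where t: "0 < t" "t \<le> x $ j" "2 * (d \<bullet> (Q *v x)) * t + qform Q d * t\<^sup>2 < 0"
    using quadratic_negative_near_zero[of "2 * (d \<bullet> (Q *v x))" "x $ j"] \<open>0 < x $ j\<close> by auto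
  have "qform Q (x + t *\<^sub>R d) < qform Q x"
    using t(3) by (simp add: qform_add_scaleR[OF assms(1)] algebra_simps)
  moreover have "x + t *\<^sub>R d \<in> std_simplex"
    using std_simplex_move_mass[OF x] t unfolding d_def by simp
  ultimately show False
    using min by fastforce
qed

lemma milp2_feasible_std_simplex:
  "milp2_feasible Q U x z y \<alpha> \<Longrightarrow> x \<in> std_simplex"
  unfolding milp2_feasible_def std_simplex_def by auto

lemma milp2_feasible_qform_le:
  assumes feas: "milp2_feasible Q U x z y \<alpha>"
  shows "qform Q x \<le> \<alpha>"
  unfolding qform_def
proof (rule std_simplex_inner_le[OF milp2_feasible_std_simplex[OF feas]])
  fix j
  assume "0 < x $ j"
  with feas have "y $ j = 1"
    unfolding milp2_feasible_def by (metis empty_iff insert_iff not_less)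
  moreover from feas have "(Q *v x) $ j \<le> \<alpha> + z $ j" "z $ j \<le> U $ j * (1 - y $ j)"
    unfolding milp2_feasible_def by auto
  ultimately show "(Q *v x) $ j \<le> \<alpha>"
    by simp
qed

lemma milp2_feasible_at_minimizer:
  assumes symm: "transpose Q = Q" and x: "x \<in> std_simplex" and opt: "qform Q x = nu Q"
    and lower: "l \<le> nu Q" and U_ge: "\<forall>j. U $ j \<ge> bigM Q l j"
  shows "milp2_feasible Q U x
    (\<chi> j. if 0 < x $ j then 0 else (Q *v x) $ j - nu Q) (\<chi> j. if 0 < x $ j then 1 else 0) (nu Q)"
proof -
  have min: "\<forall>w\<in>std_simplex. qform Q x \<le> qform Q w"
    using nu_le_qform unfolding opt by blast
  have nu_le_grad: "nu Q \<le> (Q *v x) $ k" for k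
    unfolding opt[symmetric] qform_def
    by (rule std_simplex_inner_le[OF x]) (rule std_simplex_minimizer_grad_le[OF symm x min])
  have grad_le_nu: "(Q *v x) $ j \<le> nu Q" if "0 < x $ j" for j
    unfolding opt[symmetric] qform_def
    by (rule std_simplex_inner_ge[OF x]) (rule std_simplex_minimizer_grad_le[OF symm x min that])
  have grad_le_Max: "(Q *v x) $ j \<le> Max (range (\<lambda>i. Q $ i $ j))" for j
  proof -
    have "Q $ j $ i = Q $ i $ j" for i
      using symm by (metis transpose_def vec_lambda_beta)
    then show ?thesis
      unfolding matrix_vector_mult_component_inner by (intro std_simplex_inner_le[OF x]) simp
  qed
  have x_le_1: "x $ j \<le> 1" for j
    using x member_le_sum[of j UNIV "\<lambda>i. x $ i"] unfolding std_simplex_def by auto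
  show ?thesis
    unfolding milp2_feasible_def
  proof (intro conjI allI)
    fix j
    show "(Q *v x) $ j \<le> nu Q + (\<chi> j. if 0 < x $ j then 0 else (Q *v x) $ j - nu Q) $ j"
      using grad_le_nu[of j] by auto
    show "0 \<le> (\<chi> j. if 0 < x $ j then 0 else (Q *v x) $ j - nu Q) $ j"
      using nu_le_grad[of j] by auto
    show "(\<chi> j. if 0 < x $ j then 0 else (Q *v x) $ j - nu Q) $ j
        \<le> U $ j * (1 - (\<chi> j. if 0 < x $ j then 1 else 0) $ j)"
      using grad_le_Max[of j] lower U_ge[rule_format, of j] unfolding bigM_def by auto
  qed (use x x_le_1 in \<open>auto simp: std_simplex_def\<close>)
qed

theorem proposition2:
  fixes Q :: "real^'n^'n" and l :: real and U :: "real^'n"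
  assumes symm: "transpose Q = Q"
    and lower: "\<forall>x\<in>std_simplex. l \<le> qform Q x"
    and U_ge: "\<forall>j. U $ j \<ge> bigM Q l j"
  shows "milp2_value Q U = nu Q
    \<and> (\<exists>x z y. milp2_feasible Q U x z y (nu Q))
    \<and> (\<forall>x z y \<alpha>. milp2_feasible Q U x z y \<alpha> \<longrightarrow> nu Q \<le> \<alpha>)
    \<and> (\<forall>x z y. milp2_feasible Q U x z y (nu Q) \<longrightarrow>
          x \<in> std_simplex \<and> qform Q x = nu Q)
    \<and> (\<forall>x\<in>std_simplex. qform Q x = nu Q \<longrightarrow>
          (\<exists>z y. milp2_feasible Q U x z y (nu Q)))"
proof -
  obtain x0 where x0: "x0 \<in> std_simplex" "qform Q x0 = nu Q"
    using nu_attained by blast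
  have l_le_nu: "l \<le> nu Q"
    using lower x0 by metis
  have lower_bound: "\<forall>x z y \<alpha>. milp2_feasible Q U x z y \<alpha> \<longrightarrow> nu Q \<le> \<alpha>"
    by (meson milp2_feasible_qform_le milp2_feasible_std_simplex nu_le_qform order_trans)
  have feasible_optimal: "\<forall>x z y. milp2_feasible Q U x z y (nu Q) \<longrightarrow>
      x \<in> std_simplex \<and> qform Q x = nu Q"
    by (meson antisym milp2_feasible_qform_le milp2_feasible_std_simplex nu_le_qform)
  have optimal_feasible: "\<forall>x\<in>std_simplex. qform Q x = nu Q \<longrightarrow>
      (\<exists>z y. milp2_feasible Q U x z y (nu Q))"
    using milp2_feasible_at_minimizer[OF symm _ _ l_le_nu U_ge] by blast
  then have attained: "\<exists>x z y. milp2_feasible Q U x z y (nu Q)"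
    using x0 by blast
  then have "milp2_value Q U = nu Q"
    unfolding milp2_value_def using lower_bound by (intro cInf_eq_minimum) auto
  with attained lower_bound feasible_optimal optimal_feasible show ?thesis
    by blast
qed

end
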